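(* Let $n \ge 1$ be an integer. Let $\mathcal{A}_3(n)$ be the set of all $3 \times n$ matrices $M=(m_{j,i})$ with entries in $\{0,1,2\}$ such that all three rows of $M$ have the same valuation, i.e. $\sum_{i=1}^{n} m_{1,i}2^{i-1} = \sum_{i=1}^{n} m_{2,i}2^{i-1} = \sum_{i=1}^{n} m_{3,i}2^{i-1}$. Let $\mathcal{S}(n)$ be the set of words $w_1w_2\cdots w_n$ of length $n$ over the alphabet $\{1,2,3,4,5,6,7\}$ whose last letter $w_n$ lies in $\{1,2,3\}$. Then there exists a bijection between $\mathcal{A}_3(n)$ and $\mathcal{S}(n)$.
   Context: For a vector $a=(a_1,\dots,a_n)\in\{0,1,2\}^n$, its valuation is $v(a)=\sum_{i=1}^n a_i 2^{i-1}$. The set $\mathcal{A}_3(n)$ consists of $3\times n$ matrices with entries in $\{0,1,2\}$ whose three rows, viewed as vectors in $\{0,1,2\}^n$, all have equal valuation. Equivalently, $|\mathcal{A}_3(n)|=\sum_k a(n,k)^3$ where $\sum_{k=0}^{2(2^n-1)} a(n,k)x^k=\prod_{i=0}^{n-1}(1+x^{2^i}+x^{2\cdot 2^i})$ (the $n$-th row of Stern's diatomic array). *)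

theory Defs
  imports Main
begin

text \<open>Valuation of a row: entries indexed 0..n-1 (column i+1 of the paper is index i).\<close>
definition valuation :: "nat \<Rightarrow> (nat \<Rightarrow> nat) \<Rightarrow> nat" where
  "valuation n a = (\<Sum>i<n. a i * 2 ^ i)"

text \<open>A 3 x n matrix is a function M j i (row j < 3, column i < n), extensional
  (zero outside the index range) so that distinct matrices are distinct functions.\<close>
definition A3 :: "nat \<Rightarrow> (nat \<Rightarrow> nat \<Rightarrow> nat) set" where
  "A3 n = {M. (\<forall>j i. (j < 3 \<and> i < n \<longrightarrow> M j i \<in> {0,1,2}) \<and>
                       (\<not> (j < 3 \<and> i < n) \<longrightarrow> M j i = 0)) \<and>
              valuation n (M 0) = valuation n (M 1) \<and>
              valuation n (M 1) = valuation n (M 2)}"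

text \<open>Words of length n over {1,...,7}, letter w_(i+1) stored at index i,
  extensional (0 outside), with last letter in {1,2,3}.\<close>
definition S :: "nat \<Rightarrow> (nat \<Rightarrow> nat) set" where
  "S n = {w. (\<forall>i. (i < n \<longrightarrow> w i \<in> {1..7}) \<and> (n \<le> i \<longrightarrow> w i = 0)) \<and>
             w (n - 1) \<in> {1,2,3}}"

end

theory Submission
  imports Defs
begin

text \<open>Both sets are finite of cardinality 3 * 7^(n-1), so a bijection exists. For the matrices, prescribe the valuation gaps e1 = v(row 1) - v(row 0) and
  e2 = v(row 2) - v(row 1) and split off the first column (a, b, d): this is possible only if
  a + e1 - b and b + e2 - d are even, and the remaining matrix then has the halved gaps
  ((a + e1 - b) / 2, (b + e2 - d) / 2). The gap pair (0, 0) and its six hexagonal neighbours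
  (1, 0), (0, 1), (1, -1) and their negatives are closed under this recursion; with n + 1 columns
  they are realised by 3 * 7^n and 2 * 7^n matrices respectively.\<close>

definition words :: "nat \<Rightarrow> (nat \<Rightarrow> 'a set) \<Rightarrow> (nat \<Rightarrow> 'a::zero) set" where
  "words n F = {w. \<forall>i. (i < n \<longrightarrow> w i \<in> F i) \<and> (n \<le> i \<longrightarrow> w i = 0)}"

lemma words_0: "words 0 F = {\<lambda>_. 0}"
  unfolding words_def by auto

lemma words_Suc: "words (Suc n) F = (\<lambda>(w, x). w(n := x)) ` (words n F \<times> F n)"
proof (rule set_eqI, rule iffI)
  fix w assume w: "w \<in> words (Suc n) F"
  have "(w(n := 0), w n) \<in> words n F \<times> F n"
    using w unfolding words_def by (auto simp: less_Suc_eq le_Suc_eq)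
  moreover have "w = (\<lambda>(w, x). w(n := x)) (w(n := 0), w n)" by simp
  ultimately show "w \<in> (\<lambda>(w, x). w(n := x)) ` (words n F \<times> F n)" by (rule rev_image_eqI)
next
  fix w assume "w \<in> (\<lambda>(w, x). w(n := x)) ` (words n F \<times> F n)"
  then show "w \<in> words (Suc n) F" unfolding words_def by (auto simp: less_Suc_eq)
qed

lemma inj_on_words_extend: "inj_on (\<lambda>(w, x). w(n := x)) (words n F \<times> F n)"
proof (rule inj_onI, clarsimp)
  fix w x w' x' assume "w \<in> words n F" "w' \<in> words n F" and eq: "w(n := x) = w'(n := x')"
  then have "w n = 0" "w' n = 0" unfolding words_def by auto
  with eq show "w = w' \<and> x = x'"
    by (metis fun_upd_idem fun_upd_same fun_upd_upd)
qed

lemma finite_words: "(\<And>i. i < n \<Longrightarrow> finite (F i)) \<Longrightarrow> finite (words n F)"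
  by (induction n) (simp_all add: words_0 words_Suc)

lemma card_words: "card (words n F) = (\<Prod>i<n. card (F i))"
  by (induction n) (simp_all add: words_0 words_Suc card_image inj_on_words_extend card_cartesian_product)

lemma S_eq_words: "S (Suc m) = words (Suc m) (\<lambda>i. if i = m then {1, 2, 3} else {1..7})"
  unfolding S_def words_def by (auto simp: less_Suc_eq)

lemma finite_S: "finite (S (Suc m))"
  unfolding S_eq_words by (rule finite_words) simp

lemma card_S: "card (S (Suc m)) = 3 * 7 ^ m"
proof -
  have "(\<Prod>i<m. card (if i = m then {1, 2, 3} else {1..7::nat})) = (\<Prod>i<m. 7)"
    by (rule prod.cong) auto
  then show ?thesis
    by (simp add: S_eq_words card_words)
qed

definition gap_matrices :: "nat \<Rightarrow> int \<Rightarrow> int \<Rightarrow> (nat \<Rightarrow> nat \<Rightarrow> nat) set" where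
  "gap_matrices n e1 e2 =
    {M. (\<forall>j i. (j < 3 \<and> i < n \<longrightarrow> M j i \<in> {0, 1, 2}) \<and> (\<not> (j < 3 \<and> i < n) \<longrightarrow> M j i = 0)) \<and>
        int (valuation n (M 0)) + e1 = int (valuation n (M 1)) \<and>
        int (valuation n (M 1)) + e2 = int (valuation n (M 2))}"

lemma A3_eq_gap_matrices: "A3 n = gap_matrices n 0 0"
  unfolding A3_def gap_matrices_def by simp

lemma gap_matrices_0: "gap_matrices 0 e1 e2 = (if e1 = 0 \<and> e2 = 0 then {\<lambda>_ _. 0} else {})"
  unfolding gap_matrices_def valuation_def by (auto simp: fun_eq_iff)

lemma valuation_Suc_shift: "valuation (Suc n) a = a 0 + 2 * valuation n (\<lambda>i. a (Suc i))"
  unfolding valuation_def sum.lessThan_Suc_shift by (simp add: sum_distrib_left mult_ac)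

definition col :: "nat \<times> nat \<times> nat \<Rightarrow> nat \<Rightarrow> nat" where
  "col = (\<lambda>(a, b, d) j. if j = 0 then a else if j = 1 then b else d)"

definition cons_col :: "nat \<times> nat \<times> nat \<Rightarrow> (nat \<Rightarrow> nat \<Rightarrow> nat) \<Rightarrow> nat \<Rightarrow> nat \<Rightarrow> nat" where
  "cons_col c M j i = (if j < 3 then (if i = 0 then col c j else M j (i - 1)) else 0)"

definition digit_cols :: "(nat \<times> nat \<times> nat) set" where
  "digit_cols = {0, 1, 2} \<times> {0, 1, 2} \<times> {0, 1, 2}"

definition col_fits :: "int \<Rightarrow> int \<Rightarrow> nat \<times> nat \<times> nat \<Rightarrow> bool" where
  "col_fits e1 e2 = (\<lambda>(a, b, d). even (int a + e1 - int b) \<and> even (int b + e2 - int d))"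

definition tail_gap1 :: "int \<Rightarrow> nat \<times> nat \<times> nat \<Rightarrow> int" where
  "tail_gap1 e1 = (\<lambda>(a, b, d). (int a + e1 - int b) div 2)"

definition tail_gap2 :: "int \<Rightarrow> nat \<times> nat \<times> nat \<Rightarrow> int" where
  "tail_gap2 e2 = (\<lambda>(a, b, d). (int b + e2 - int d) div 2)"

lemma halved_gap_iff:
  fixes a b e x y :: int
  shows "a + 2 * x + e = b + 2 * y \<longleftrightarrow> even (a + e - b) \<and> x + (a + e - b) div 2 = y"
proof -
  define d where "d = a + e - b"
  have "a + 2 * x + e = b + 2 * y \<longleftrightarrow> d = 2 * (y - x)"
    unfolding d_def by arith
  also have "\<dots> \<longleftrightarrow> even d \<and> x + d div 2 = y"
    by auto
  finally show ?thesis
    unfolding d_def .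
qed

lemma valuation_cons_col:
  "j < 3 \<Longrightarrow> valuation (Suc n) (cons_col c M j) = col c j + 2 * valuation n (M j)"
  by (simp add: valuation_Suc_shift cons_col_def)

lemma gap_matrices_SucE:
  assumes M: "M \<in> gap_matrices (Suc n) e1 e2"
  obtains c M' where "c \<in> digit_cols" "col_fits e1 e2 c"
    "M' \<in> gap_matrices n (tail_gap1 e1 c) (tail_gap2 e2 c)" "M = cons_col c M'"
proof -
  define c where "c = (M 0 0, M 1 0, M 2 0)"
  define M' where "M' = (\<lambda>j i. M j (Suc i))"
  have outside: "\<And>j i. \<not> (j < 3 \<and> i < Suc n) \<Longrightarrow> M j i = 0"
    and digit: "\<And>j i. j < 3 \<Longrightarrow> i < Suc n \<Longrightarrow> M j i \<in> {0, 1, 2}"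
    using M unfolding gap_matrices_def by auto
  have "\<And>j. valuation (Suc n) (M j) = M j 0 + 2 * valuation n (M' j)"
    by (simp add: valuation_Suc_shift M'_def)
  then have gap1: "int (M 0 0) + 2 * int (valuation n (M' 0)) + e1 =
      int (M 1 0) + 2 * int (valuation n (M' 1))"
    and gap2: "int (M 1 0) + 2 * int (valuation n (M' 1)) + e2 =
      int (M 2 0) + 2 * int (valuation n (M' 2))"
    using M unfolding gap_matrices_def by auto
  have c_digits: "c \<in> digit_cols"
    unfolding c_def digit_cols_def by (intro SigmaI digit) simp_all
  have c_fits: "col_fits e1 e2 c"
    using gap1 gap2 unfolding halved_gap_iff by (simp add: col_fits_def c_def)
  have "int (valuation n (M' 0)) + tail_gap1 e1 c = int (valuation n (M' 1))"
    and "int (valuation n (M' 1)) + tail_gap2 e2 c = int (valuation n (M' 2))"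
    using gap1 gap2 unfolding halved_gap_iff by (simp_all add: tail_gap1_def tail_gap2_def c_def)
  then have M'_tail: "M' \<in> gap_matrices n (tail_gap1 e1 c) (tail_gap2 e2 c)"
    using digit outside unfolding gap_matrices_def by (auto simp: M'_def)
  have M_eq: "M = cons_col c M'"
  proof (intro ext)
    fix j i
    show "M j i = cons_col c M' j i"
    proof (cases "j < 3")
      case True
      then have "j = 0 \<or> j = 1 \<or> j = 2" by auto
      then show ?thesis
        using True by (cases i) (auto simp: cons_col_def col_def c_def M'_def)
    next
      case False
      then show ?thesis using outside by (simp add: cons_col_def)
    qed
  qed
  show ?thesis
    by (rule that[OF c_digits c_fits M'_tail M_eq])
qed

lemma cons_col_in_gap_matrices:
  assumes c: "c \<in> digit_cols" "col_fits e1 e2 c"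
    and M: "M \<in> gap_matrices n (tail_gap1 e1 c) (tail_gap2 e2 c)"
  shows "cons_col c M \<in> gap_matrices (Suc n) e1 e2"
proof -
  obtain a b d where abd: "c = (a, b, d)" by (cases c)
  have col_digit: "col c j \<in> {0, 1, 2}" for j
    using c(1) by (auto simp: digit_cols_def col_def abd)
  have entries: "cons_col c M j i \<in> {0, 1, 2}" if "j < 3" "i < Suc n" for j i
    using that M col_digit[of j] unfolding gap_matrices_def cons_col_def by (cases i) auto
  have outside: "cons_col c M j i = 0" if "\<not> (j < 3 \<and> i < Suc n)" for j i
    using that M unfolding gap_matrices_def cons_col_def by (cases i) auto
  have "even (int a + e1 - int b)" "even (int b + e2 - int d)"
    using c(2) by (simp_all add: col_fits_def abd)
  moreover have "int (valuation n (M 0)) + (int a + e1 - int b) div 2 = int (valuation n (M 1))"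
    and "int (valuation n (M 1)) + (int b + e2 - int d) div 2 = int (valuation n (M 2))"
    using M by (simp_all add: gap_matrices_def tail_gap1_def tail_gap2_def abd)
  ultimately have "int a + 2 * int (valuation n (M 0)) + e1 = int b + 2 * int (valuation n (M 1))"
    and "int b + 2 * int (valuation n (M 1)) + e2 = int d + 2 * int (valuation n (M 2))"
    unfolding halved_gap_iff by simp_all
  then show ?thesis
    using entries outside unfolding gap_matrices_def
    by (simp add: valuation_cons_col col_def abd)
qed

lemma gap_matrices_Suc:
  "gap_matrices (Suc n) e1 e2 = (\<lambda>(c, M). cons_col c M) `
     (SIGMA c:{c \<in> digit_cols. col_fits e1 e2 c}. gap_matrices n (tail_gap1 e1 c) (tail_gap2 e2 c))"
  by (fastforce elim: gap_matrices_SucE intro: cons_col_in_gap_matrices)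

lemma cons_col_inject:
  assumes M: "\<forall>j\<ge>3. \<forall>i. M j i = 0" and M': "\<forall>j\<ge>3. \<forall>i. M' j i = 0"
    and eq: "cons_col c M = cons_col c' M'"
  shows "c = c' \<and> M = M'"
proof
  have "col c j = col c' j" if "j < 3" for j
    using fun_cong[OF fun_cong[OF eq, of j], of 0] that by (simp add: cons_col_def)
  then have "col c 0 = col c' 0" "col c 1 = col c' 1" "col c 2 = col c' 2"
    by simp_all
  then show "c = c'"
    by (cases c, cases c') (simp add: col_def)
  have "M j i = M' j i" for j i
    using fun_cong[OF fun_cong[OF eq, of j], of "Suc i"] M M' by (cases "j < 3") (auto simp: cons_col_def)
  then show "M = M'" by blast
qed

lemma inj_on_cons_col: "inj_on (\<lambda>(c, M). cons_col c M) {(c, M). \<forall>j\<ge>3. \<forall>i. M j i = 0}"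
proof (rule inj_onI)
  fix x y
  assume "x \<in> {(c, M). \<forall>j\<ge>3. \<forall>i. M j i = 0}" "y \<in> {(c, M). \<forall>j\<ge>3. \<forall>i. M j i = 0}"
    and "(\<lambda>(c, M). cons_col c M) x = (\<lambda>(c, M). cons_col c M) y"
  then show "x = y"
    by (cases x, cases y) (simp add: cons_col_inject)
qed

lemma finite_digit_cols: "finite digit_cols"
  by (simp add: digit_cols_def)

lemma finite_gap_matrices: "finite (gap_matrices n e1 e2)"
  by (induction n arbitrary: e1 e2) (simp_all add: gap_matrices_0 gap_matrices_Suc finite_digit_cols)

lemma card_gap_matrices_Suc:
  "card (gap_matrices (Suc n) e1 e2) =
     (\<Sum>c\<in>digit_cols. if col_fits e1 e2 c then card (gap_matrices n (tail_gap1 e1 c) (tail_gap2 e2 c)) else 0)"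
proof -
  have "inj_on (\<lambda>(c, M). cons_col c M)
      (SIGMA c:{c \<in> digit_cols. col_fits e1 e2 c}. gap_matrices n (tail_gap1 e1 c) (tail_gap2 e2 c))"
    by (rule inj_on_subset[OF inj_on_cons_col]) (auto simp: gap_matrices_def)
  then show ?thesis
    by (simp add: gap_matrices_Suc card_image finite_digit_cols finite_gap_matrices sum.inter_filter)
qed

lemma sum_digit_cols:
  "sum f digit_cols = (\<Sum>a\<in>{0, 1, 2}. \<Sum>b\<in>{0, 1, 2}. \<Sum>d\<in>{0, 1, 2}. f (a, b, d))"
  unfolding digit_cols_def sum.cartesian_product by simp

lemma card_gap_matrices:
  assumes "(e1, e2) \<in> {(0, 0), (1, 0), (-1, 0), (0, 1), (0, -1), (1, -1), (-1, 1)}"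
  shows "card (gap_matrices (Suc n) e1 e2) = (if e1 = 0 \<and> e2 = 0 then 3 else 2) * 7 ^ n"
  using assms
proof (induction n arbitrary: e1 e2)
  case 0
  then show ?case
    by (elim insertE emptyE)
      (simp_all add: card_gap_matrices_Suc gap_matrices_0 sum_digit_cols col_fits_def tail_gap1_def tail_gap2_def)
next
  case (Suc n)
  then show ?case
    by (elim insertE emptyE)
      (simp_all add: card_gap_matrices_Suc[of "Suc n"] sum_digit_cols col_fits_def tail_gap1_def tail_gap2_def)
qed

theorem mainTheorem1:
  fixes n :: nat
  assumes "n \<ge> 1"
  shows "\<exists>f. bij_betw f (A3 n) (S n)"
proof -
  obtain m where m: "n = Suc m"
    using assms by (cases n) auto
  have "finite (A3 n)"
    by (simp add: A3_eq_gap_matrices finite_gap_matrices)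
  moreover have "finite (S n)"
    by (simp add: m finite_S)
  moreover have "card (A3 n) = card (S n)"
    using card_gap_matrices[of 0 0 m] by (simp add: A3_eq_gap_matrices card_S m)
  ultimately show ?thesis
    by (rule finite_same_card_bij)
qed

end
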